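(* Let $g\in\mathcal{H}(\mathbb{D})$ be zero-free, let $h$ be a branch of the logarithm of $g$, and for $\beta\in\mathbb{R}$ set $g^\beta:=e^{\beta h}$. Then for every $\beta\in\mathbb{R}$ and every $\varepsilon\in\mathbb{R}\setminus\{1\}$, \[ S_{g^\beta}T_{g^\beta}^2=\frac{(2\beta-1)\beta}{1-\varepsilon}\,T_gT_{g^{1-\varepsilon}}M_{g^{2\beta-2+\varepsilon}}T_{g^\beta}+\frac{\beta^2}{1-\varepsilon}\,T_gT_{g^{1-\varepsilon}}M_{g^{3\beta-2+\varepsilon}} \] as operators on $\mathcal{H}(\mathbb{D})$.
   Context: $\mathcal{H}(\mathbb{D})$ is the space of analytic functions on the unit disc. For analytic $u$: $M_uf=uf$, $T_uf(z)=\int_0^zf(\zeta)u'(\zeta)\,d\zeta$, $S_uf(z)=\int_0^zf'(\zeta)u(\zeta)\,d\zeta$. *)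

theory Defs
  imports "HOL-Complex_Analysis.Complex_Analysis"
begin

text \<open>Functions are
  represented as maps complex to complex; only their values on the open unit disc
  (ball 0 1) matter.\<close>

definition Mop :: "(complex \<Rightarrow> complex) \<Rightarrow> (complex \<Rightarrow> complex) \<Rightarrow> complex \<Rightarrow> complex" where
  "Mop u f = (\<lambda>z. u z * f z)"

definition Top :: "(complex \<Rightarrow> complex) \<Rightarrow> (complex \<Rightarrow> complex) \<Rightarrow> complex \<Rightarrow> complex" where
  "Top u f = (\<lambda>z. contour_integral (linepath 0 z) (\<lambda>\<zeta>. f \<zeta> * deriv u \<zeta>))"

definition Sop :: "(complex \<Rightarrow> complex) \<Rightarrow> (complex \<Rightarrow> complex) \<Rightarrow> complex \<Rightarrow> complex" where
  "Sop u f = (\<lambda>z. contour_integral (linepath 0 z) (\<lambda>\<zeta>. deriv f \<zeta> * u \<zeta>))"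

definition gpow :: "(complex \<Rightarrow> complex) \<Rightarrow> real \<Rightarrow> complex \<Rightarrow> complex" where
  "gpow h \<beta> = (\<lambda>z. exp (of_real \<beta> * h z))"

end

theory Submission
  imports Defs
begin

(*
  Both sides equal \<beta> T_g M_{g^(2\<beta>-1)} T_{g^\<beta>} f. For the left side this is the identity
  S_{g^b} T_{g^b} = b T_g M_{g^(2b-1)}; for the right side it is the integration by parts
    g^a T_{g^b} F = (a/c) T_{g^c} M_{g^(a-c)} T_{g^b} F + (b/c) T_{g^c} M_{g^(a+b-c)} F   (c \<noteq> 0)
  with a = 2\<beta> - 1, b = \<beta>, c = 1 - \<epsilon>. Each identity holds because its two sides vanish
  at 0 and, as (g^c)' = c h' g^c, have the same derivative.
*)

lemma contour_integral_linepath_has_field_derivative: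
  fixes \<phi> :: "complex \<Rightarrow> complex"
  assumes "convex S" "open S" "\<phi> holomorphic_on S" "a \<in> S" "z \<in> S"
  shows "((\<lambda>w. contour_integral (linepath a w) \<phi>) has_field_derivative \<phi> z) (at z)"
proof -
  obtain F where F: "\<And>x. x \<in> S \<Longrightarrow> (F has_field_derivative \<phi> x) (at x within S)"
    using holomorphic_convex_primitive'[OF assms(1-3)] by blast
  have integral_eq: "contour_integral (linepath a w) \<phi> = F w - F a" if "w \<in> S" for w
  proof -
    have "closed_segment a w \<subseteq> S"
      using assms(1,4) that by (simp add: closed_segment_subset)
    then have "(\<phi> has_contour_integral F (pathfinish (linepath a w)) - F (pathstart (linepath a w)))
        (linepath a w)"
      by (intro contour_integral_primitive[OF F]) auto
    then show ?thesis by (simp add: contour_integral_unique)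
  qed
  have "((\<lambda>w. F w - F a) has_field_derivative \<phi> z) (at z)"
    using F[OF assms(5)] at_within_open[OF assms(5,2)] by (auto intro!: derivative_eq_intros)
  then show ?thesis
    by (rule has_field_derivative_transform_within_open[OF _ assms(2,5)]) (simp add: integral_eq)
qed

lemma eq_if_field_derivatives_agree:
  fixes F G :: "'a::real_normed_field \<Rightarrow> 'a"
  assumes "convex S" "a \<in> S" "z \<in> S" "F a = G a"
    and "\<And>w. w \<in> S \<Longrightarrow> (F has_field_derivative F' w) (at w)"
    and "\<And>w. w \<in> S \<Longrightarrow> (G has_field_derivative G' w) (at w)"
    and "\<And>w. w \<in> S \<Longrightarrow> F' w = G' w"
  shows "F z = G z"
proof -
  have "\<exists>c. \<forall>w\<in>S. F w - G w = c"
  proof (rule has_field_derivative_zero_constant[OF \<open>convex S\<close>])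
    fix w assume "w \<in> S"
    then have "((\<lambda>w. F w - G w) has_field_derivative F' w - G' w) (at w)"
      using assms(5,6) by (intro DERIV_diff)
    then show "((\<lambda>w. F w - G w) has_field_derivative 0) (at w within S)"
      using assms(7)[OF \<open>w \<in> S\<close>] by (simp add: has_field_derivative_at_within)
  qed
  then obtain c where "\<And>w. w \<in> S \<Longrightarrow> F w - G w = c"
    by blast
  then have "F z - G z = F a - G a"
    using assms(2,3) by simp
  with assms(4) show ?thesis
    by simp
qed

lemma Top_has_field_derivative:
  assumes "u holomorphic_on ball 0 1" "F holomorphic_on ball 0 1" "z \<in> ball 0 1"
  shows "(Top u F has_field_derivative F z * deriv u z) (at z)"
  unfolding Top_def
  by (rule contour_integral_linepath_has_field_derivative[where S="ball 0 1"])
    (use assms in \<open>auto intro!: holomorphic_intros holomorphic_deriv\<close>)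

lemma Sop_has_field_derivative:
  assumes "u holomorphic_on ball 0 1" "F holomorphic_on ball 0 1" "z \<in> ball 0 1"
  shows "(Sop u F has_field_derivative deriv F z * u z) (at z)"
  unfolding Sop_def
  by (rule contour_integral_linepath_has_field_derivative[where S="ball 0 1"])
    (use assms in \<open>auto intro!: holomorphic_intros holomorphic_deriv\<close>)

lemma Top_holomorphic:
  assumes "u holomorphic_on ball 0 1" "F holomorphic_on ball 0 1"
  shows "Top u F holomorphic_on ball 0 1"
  unfolding holomorphic_on_open[OF open_ball] using Top_has_field_derivative[OF assms] by blast

lemma Top_at_0 [simp]: "Top u F 0 = 0"
  by (simp add: Top_def)

lemma Sop_at_0 [simp]: "Sop u F 0 = 0"
  by (simp add: Sop_def)

lemma Top_integrand_contour_integrable: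
  assumes "u holomorphic_on ball 0 1" "F holomorphic_on ball 0 1" "z \<in> ball 0 1"
  shows "(\<lambda>\<zeta>. F \<zeta> * deriv u \<zeta>) contour_integrable_on linepath 0 z"
proof (rule contour_integrable_holomorphic_simple[OF _ open_ball])
  show "(\<lambda>\<zeta>. F \<zeta> * deriv u \<zeta>) holomorphic_on ball 0 1"
    using assms(1,2) by (auto intro!: holomorphic_intros holomorphic_deriv)
  show "path_image (linepath 0 z) \<subseteq> ball 0 1"
    using assms(3) by (simp add: closed_segment_subset)
qed auto

lemma Top_cmult:
  assumes "u holomorphic_on ball 0 1" "F holomorphic_on ball 0 1" "z \<in> ball 0 1"
  shows "Top u (\<lambda>w. c * F w) z = c * Top u F z"
  using contour_integral_lmul[OF Top_integrand_contour_integrable[OF assms], of c]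
  by (simp add: Top_def mult.assoc)

lemma Top_add:
  assumes "u holomorphic_on ball 0 1" "F holomorphic_on ball 0 1" "G holomorphic_on ball 0 1"
    and "z \<in> ball 0 1"
  shows "Top u (\<lambda>w. F w + G w) z = Top u F z + Top u G z"
  using contour_integral_add[OF Top_integrand_contour_integrable[OF assms(1,2,4)]
      Top_integrand_contour_integrable[OF assms(1,3,4)]]
  by (simp add: Top_def distrib_right)

lemma Top_cong:
  assumes "\<And>w. w \<in> ball 0 1 \<Longrightarrow> F w = G w" "z \<in> ball 0 1"
  shows "Top u F z = Top u G z"
proof -
  have "closed_segment 0 z \<subseteq> ball 0 1"
    using assms(2) by (simp add: closed_segment_subset)
  then show ?thesis
    unfolding Top_def using assms(1) by (auto intro!: contour_integral_eq)
qed

lemma Mop_holomorphic: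
  "u holomorphic_on S \<Longrightarrow> F holomorphic_on S \<Longrightarrow> Mop u F holomorphic_on S"
  unfolding Mop_def by (intro holomorphic_intros)

lemma gpow_holomorphic: "h holomorphic_on S \<Longrightarrow> gpow h c holomorphic_on S"
  unfolding gpow_def by (intro holomorphic_intros)

lemma gpow_mult: "gpow h a z * gpow h b z = gpow h (a + b) z"
  by (simp add: gpow_def distrib_right flip: exp_add)

lemma gpow_has_field_derivative:
  assumes "(h has_field_derivative h') (at z)"
  shows "(gpow h c has_field_derivative of_real c * h' * gpow h c z) (at z)"
  unfolding gpow_def using assms by (auto intro!: derivative_eq_intros)

lemma deriv_gpow:
  assumes "h holomorphic_on ball 0 1" "z \<in> ball 0 1"
  shows "deriv (gpow h c) z = of_real c * deriv h z * gpow h c z"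
  using assms by (intro DERIV_imp_deriv gpow_has_field_derivative holomorphic_derivI) auto

lemma exp_branch_has_field_derivative:
  assumes "h holomorphic_on S" "open S" "\<forall>w\<in>S. exp (h w) = g w" "z \<in> S"
  shows "(g has_field_derivative deriv h z * g z) (at z)"
proof -
  have "((\<lambda>w. exp (h w)) has_field_derivative exp (h z) * deriv h z) (at z)"
    using assms by (auto intro!: derivative_eq_intros holomorphic_derivI)
  then have "((\<lambda>w. exp (h w)) has_field_derivative deriv h z * g z) (at z)"
    using assms(3,4) by (simp add: mult.commute)
  then show ?thesis
    by (rule has_field_derivative_transform_within_open[OF _ \<open>open S\<close> \<open>z \<in> S\<close>])
      (use assms(3) in simp)
qed

lemma Top_gpow_has_field_derivative:
  assumes "h holomorphic_on ball 0 1" "F holomorphic_on ball 0 1" "z \<in> ball 0 1"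
  shows "(Top (gpow h c) F has_field_derivative of_real c * deriv h z * gpow h c z * F z) (at z)"
  using Top_has_field_derivative[OF gpow_holomorphic assms(2,3)] assms
  by (simp add: deriv_gpow mult_ac)

lemma gpow_mult_Top_gpow:
  fixes a b c :: real
  assumes h: "h holomorphic_on ball 0 1" and F: "F holomorphic_on ball 0 1"
    and "c \<noteq> 0" and "z \<in> ball 0 1"
  shows "gpow h a z * Top (gpow h b) F z =
      of_real (a / c) * Top (gpow h c) (Mop (gpow h (a - c)) (Top (gpow h b) F)) z
    + of_real (b / c) * Top (gpow h c) (Mop (gpow h (a + b - c)) F) z"
proof -
  let ?TF = "Top (gpow h b) F"
  let ?L = "\<lambda>z. gpow h a z * ?TF z"
  let ?R = "\<lambda>z. of_real (a / c) * Top (gpow h c) (Mop (gpow h (a - c)) ?TF) z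
    + of_real (b / c) * Top (gpow h c) (Mop (gpow h (a + b - c)) F) z"
  have TF: "?TF holomorphic_on ball 0 1"
    by (intro Top_holomorphic gpow_holomorphic h F)
  have "?L z = ?R z"
  proof (rule eq_if_field_derivatives_agree[where S = "ball 0 1" and a = 0 and F = ?L and G = ?R])
    fix w :: complex assume w: "w \<in> ball 0 1"
    have dh: "(h has_field_derivative deriv h w) (at w)"
      using h w by (auto intro: holomorphic_derivI)
    show "(?L has_field_derivative
        gpow h a w * (of_real b * deriv h w * gpow h b w * F w)
        + of_real a * deriv h w * gpow h a w * ?TF w) (at w)"
      by (intro DERIV_mult' gpow_has_field_derivative dh Top_gpow_has_field_derivative h F w)
    show "(?R has_field_derivative
        of_real (a / c) * (of_real c * deriv h w * gpow h c w * Mop (gpow h (a - c)) ?TF w)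
      + of_real (b / c) * (of_real c * deriv h w * gpow h c w * Mop (gpow h (a + b - c)) F w)) (at w)"
      by (intro DERIV_add DERIV_cmult Top_gpow_has_field_derivative Mop_holomorphic
          gpow_holomorphic h F TF w)
    have "gpow h c w * gpow h (a - c) w = gpow h a w"
         "gpow h c w * gpow h (a + b - c) w = gpow h a w * gpow h b w"
      by (simp_all add: gpow_mult)
    then show "gpow h a w * (of_real b * deriv h w * gpow h b w * F w)
        + of_real a * deriv h w * gpow h a w * ?TF w
      = of_real (a / c) * (of_real c * deriv h w * gpow h c w * Mop (gpow h (a - c)) ?TF w)
      + of_real (b / c) * (of_real c * deriv h w * gpow h c w * Mop (gpow h (a + b - c)) F w)"
      using \<open>c \<noteq> 0\<close> by (simp add: Mop_def algebra_simps)
  qed (use \<open>z \<in> ball 0 1\<close> in auto)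
  then show ?thesis
    by simp
qed

lemma Sop_gpow_Top_gpow:
  assumes h: "h holomorphic_on ball 0 1" and g: "g holomorphic_on ball 0 1"
    and exp_h: "\<forall>w\<in>ball 0 1. exp (h w) = g w"
    and F: "F holomorphic_on ball 0 1" and "z \<in> ball 0 1"
  shows "Sop (gpow h b) (Top (gpow h b) F) z = of_real b * Top g (Mop (gpow h (2 * b - 1)) F) z"
proof -
  let ?L = "Sop (gpow h b) (Top (gpow h b) F)"
  let ?R = "\<lambda>z. of_real b * Top g (Mop (gpow h (2 * b - 1)) F) z"
  show ?thesis
  proof (rule eq_if_field_derivatives_agree[where S = "ball 0 1" and a = 0 and F = ?L and G = ?R])
    fix w :: complex assume w: "w \<in> ball 0 1"
    have "Top (gpow h b) F holomorphic_on ball 0 1"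
      by (intro Top_holomorphic gpow_holomorphic h F)
    then have "(?L has_field_derivative deriv (Top (gpow h b) F) w * gpow h b w) (at w)"
      by (intro Sop_has_field_derivative gpow_holomorphic h w)
    moreover have "deriv (Top (gpow h b) F) w = of_real b * deriv h w * gpow h b w * F w"
      by (intro DERIV_imp_deriv Top_gpow_has_field_derivative h F w)
    ultimately show "(?L has_field_derivative
        of_real b * deriv h w * gpow h b w * F w * gpow h b w) (at w)"
      by simp
    show "(?R has_field_derivative of_real b * (Mop (gpow h (2 * b - 1)) F w * deriv g w)) (at w)"
      by (intro DERIV_cmult Top_has_field_derivative Mop_holomorphic gpow_holomorphic g h F w)
    have "deriv g w = deriv h w * gpow h 1 w"
      using exp_branch_has_field_derivative[OF h open_ball exp_h w] exp_h w
      by (simp add: DERIV_imp_deriv gpow_def)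
    moreover have "gpow h (2 * b - 1) w * gpow h 1 w = gpow h b w * gpow h b w"
      by (simp add: gpow_mult)
    ultimately show "of_real b * deriv h w * gpow h b w * F w * gpow h b w
      = of_real b * (Mop (gpow h (2 * b - 1)) F w * deriv g w)"
      by (simp add: Mop_def algebra_simps)
  qed (use \<open>z \<in> ball 0 1\<close> in auto)
qed

theorem lemma5p2:
  fixes g h :: "complex \<Rightarrow> complex" and \<beta> \<epsilon> :: real
  assumes "g holomorphic_on ball 0 1"
    and "\<forall>z\<in>ball 0 1. g z \<noteq> 0"
    and "h holomorphic_on ball 0 1"
    and "\<forall>z\<in>ball 0 1. exp (h z) = g z"
    and "\<epsilon> \<noteq> 1"
    and "f holomorphic_on ball 0 1"
    and "z \<in> ball 0 1"
  shows "Sop (gpow h \<beta>) (Top (gpow h \<beta>) (Top (gpow h \<beta>) f)) z =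
     of_real ((2 * \<beta> - 1) * \<beta> / (1 - \<epsilon>)) *
       Top g (Top (gpow h (1 - \<epsilon>)) (Mop (gpow h (2 * \<beta> - 2 + \<epsilon>)) (Top (gpow h \<beta>) f))) z
   + of_real (\<beta>^2 / (1 - \<epsilon>)) *
       Top g (Top (gpow h (1 - \<epsilon>)) (Mop (gpow h (3 * \<beta> - 2 + \<epsilon>)) f)) z"
proof -
  note g = \<open>g holomorphic_on ball 0 1\<close> and h = \<open>h holomorphic_on ball 0 1\<close>
    and f = \<open>f holomorphic_on ball 0 1\<close> and z = \<open>z \<in> ball 0 1\<close>
  let ?T1 = "Top (gpow h \<beta>) f"
  let ?A1 = "Top (gpow h (1 - \<epsilon>)) (Mop (gpow h (2 * \<beta> - 2 + \<epsilon>)) ?T1)"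
  let ?A2 = "Top (gpow h (1 - \<epsilon>)) (Mop (gpow h (3 * \<beta> - 2 + \<epsilon>)) f)"
  let ?c1 = "of_real ((2 * \<beta> - 1) * \<beta> / (1 - \<epsilon>)) :: complex"
  let ?c2 = "of_real (\<beta>^2 / (1 - \<epsilon>)) :: complex"
  have T1: "?T1 holomorphic_on ball 0 1"
    by (intro Top_holomorphic gpow_holomorphic h f)
  have A: "?A1 holomorphic_on ball 0 1" "?A2 holomorphic_on ball 0 1"
    by (intro Top_holomorphic Mop_holomorphic gpow_holomorphic h f T1)+
  have "1 - \<epsilon> \<noteq> 0"
    using \<open>\<epsilon> \<noteq> 1\<close> by simp
  have ibp: "?c1 * ?A1 w + ?c2 * ?A2 w = of_real \<beta> * Mop (gpow h (2 * \<beta> - 1)) ?T1 w"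
    if "w \<in> ball 0 1" for w
    using gpow_mult_Top_gpow[OF h f \<open>1 - \<epsilon> \<noteq> 0\<close> that, where a = "2 * \<beta> - 1" and b = \<beta>]
    by (simp add: Mop_def power2_eq_square algebra_simps)
  have "?c1 * Top g ?A1 z + ?c2 * Top g ?A2 z = Top g (\<lambda>w. ?c1 * ?A1 w) z + Top g (\<lambda>w. ?c2 * ?A2 w) z"
    by (simp only: Top_cmult g A z)
  also have "\<dots> = Top g (\<lambda>w. ?c1 * ?A1 w + ?c2 * ?A2 w) z"
    by (rule Top_add[symmetric]) (use g A z in \<open>auto intro!: holomorphic_intros\<close>)
  also have "\<dots> = Top g (\<lambda>w. of_real \<beta> * Mop (gpow h (2 * \<beta> - 1)) ?T1 w) z"
    using z by (intro Top_cong ibp)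
  also have "\<dots> = of_real \<beta> * Top g (Mop (gpow h (2 * \<beta> - 1)) ?T1) z"
    using g z by (intro Top_cmult Mop_holomorphic gpow_holomorphic h T1)
  also have "\<dots> = Sop (gpow h \<beta>) (Top (gpow h \<beta>) ?T1) z"
    using Sop_gpow_Top_gpow[OF h g \<open>\<forall>z\<in>ball 0 1. exp (h z) = g z\<close> T1 z] by simp
  finally show ?thesis
    by simp
qed

end
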